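(* Let $(\mathcal O,\mathcal D)$ be an antichain duality of $\sigma$-structures such that the members of $\mathcal O$ are cores. Then $|\mathcal D|=1$ if and only if the members of $\mathcal O$ are connected.
   Context: A type $\sigma$ is a finite set of relation symbols with arities; a $\sigma$-structure $\mathbf A$ is a finite set $V(\mathbf A)$ with an $r$-ary relation $R(\mathbf A)$ for each $R\in\sigma$ of arity $r$; homomorphisms are relation-preserving maps and $\mathbf A\to\mathbf B$ means one exists. $\mathbf A$ is a core if every homomorphically equivalent structure has at least as many vertices. $(\mathcal O,\mathcal D)$ is a duality pair if for every $\sigma$-structure $\mathbf A$: $\mathbf A\to\mathbf D$ for some $\mathbf D\in\mathcal D$ iff no $\mathbf T\in\mathcal O$ satisfies $\mathbf T\to\mathbf A$; it is an antichain duality if moreover $\mathcal O\cup\mathcal D$ is an antichain (no homomorphism between two distinct members). $\mathbf A$ is connected if its incidence multigraph (bipartite, with parts $V(\mathbf A)$ and the blocks $(R,(x_1,\dots,x_r))$, $(x_1,\dots,x_r)\in R(\mathbf A)$, with an edge from $x_i$ to the block for each $i$) is connected. *)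

theory Defs
  imports Main
begin

text \<open>A sigma-structure has a finite vertex set (a subset of nat; every
finite structure is isomorphic to one of this form) and, for each symbol R, a set of
tuples (lists of length ar R over the vertex set).\<close>

record 'r struc =
  verts :: "nat set"
  rels :: "'r \<Rightarrow> nat list set"

definition is_struc :: "'r set \<Rightarrow> ('r \<Rightarrow> nat) \<Rightarrow> 'r struc \<Rightarrow> bool" where
  "is_struc S ar A \<longleftrightarrow> finite (verts A)
     \<and> (\<forall>R\<in>S. \<forall>t\<in>rels A R. length t = ar R \<and> set t \<subseteq> verts A)
     \<and> (\<forall>R. R \<notin> S \<longrightarrow> rels A R = {})"

definition is_hom :: "'r set \<Rightarrow> 'r struc \<Rightarrow> 'r struc \<Rightarrow> (nat \<Rightarrow> nat) \<Rightarrow> bool" where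
  "is_hom S A B f \<longleftrightarrow> f ` verts A \<subseteq> verts B
     \<and> (\<forall>R\<in>S. \<forall>t\<in>rels A R. map f t \<in> rels B R)"

definition hom_to :: "'r set \<Rightarrow> 'r struc \<Rightarrow> 'r struc \<Rightarrow> bool" where
  "hom_to S A B \<longleftrightarrow> (\<exists>f. is_hom S A B f)"

definition hom_equiv :: "'r set \<Rightarrow> 'r struc \<Rightarrow> 'r struc \<Rightarrow> bool" where
  "hom_equiv S A B \<longleftrightarrow> hom_to S A B \<and> hom_to S B A"

definition is_core :: "'r set \<Rightarrow> ('r \<Rightarrow> nat) \<Rightarrow> 'r struc \<Rightarrow> bool" where
  "is_core S ar A \<longleftrightarrow> (\<forall>B. is_struc S ar B \<and> hom_equiv S A B \<longrightarrow> card (verts A) \<le> card (verts B))"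

definition duality_pair :: "'r set \<Rightarrow> ('r \<Rightarrow> nat) \<Rightarrow> 'r struc set \<Rightarrow> 'r struc set \<Rightarrow> bool" where
  "duality_pair S ar Obs Dl \<longleftrightarrow> (\<forall>T\<in>Obs. is_struc S ar T) \<and> (\<forall>X\<in>Dl. is_struc S ar X)
     \<and> (\<forall>A. is_struc S ar A \<longrightarrow> ((\<exists>X\<in>Dl. hom_to S A X) \<longleftrightarrow> \<not> (\<exists>T\<in>Obs. hom_to S T A)))"

definition antichain_duality :: "'r set \<Rightarrow> ('r \<Rightarrow> nat) \<Rightarrow> 'r struc set \<Rightarrow> 'r struc set \<Rightarrow> bool" where
  "antichain_duality S ar Obs Dl \<longleftrightarrow> duality_pair S ar Obs Dl
     \<and> (\<forall>A\<in>Obs \<union> Dl. \<forall>B\<in>Obs \<union> Dl. A \<noteq> B \<longrightarrow> \<not> hom_to S A B)"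

text \<open>Incidence multigraph: nodes are vertices (Inl v) and blocks (Inr (R,t));
vertex x_i is adjacent to the block for each position i (parallel edges do not matter
for connectivity).\<close>

definition inc_nodes :: "'r set \<Rightarrow> 'r struc \<Rightarrow> (nat + ('r \<times> nat list)) set" where
  "inc_nodes S A = Inl ` verts A \<union> Inr ` {(R, t). R \<in> S \<and> t \<in> rels A R}"

definition inc_adj :: "'r set \<Rightarrow> 'r struc \<Rightarrow> (nat + ('r \<times> nat list)) \<Rightarrow> (nat + ('r \<times> nat list)) \<Rightarrow> bool" where
  "inc_adj S A x y \<longleftrightarrow>
     (\<exists>v R t. v \<in> verts A \<and> R \<in> S \<and> t \<in> rels A R \<and> v \<in> set t
        \<and> ((x = Inl v \<and> y = Inr (R, t)) \<or> (x = Inr (R, t) \<and> y = Inl v)))"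

definition connected_struc :: "'r set \<Rightarrow> 'r struc \<Rightarrow> bool" where
  "connected_struc S A \<longleftrightarrow> inc_nodes S A \<noteq> {}
     \<and> (\<forall>x\<in>inc_nodes S A. \<forall>y\<in>inc_nodes S A. (inc_adj S A)\<^sup>*\<^sup>* x y)"

end

theory Submission
  imports Defs
begin

text \<open>If \<open>\<D> = {D}\<close> and an obstruction \<open>T\<close> splits into two unions of components, each part
is a proper substructure of the core \<open>T\<close>; no obstruction maps into it (it would map into \<open>T\<close>,
hence be \<open>T\<close> by the antichain property, contradicting that \<open>T\<close> is a core), so both parts map
to \<open>D\<close>, and so does \<open>T\<close>, which is impossible since \<open>D \<rightarrow> D\<close>. Conversely, if all obstructions
are connected and \<open>D\<^sub>1 \<noteq> D\<^sub>2\<close> lie in \<open>\<D>\<close>, then no obstruction maps to \<open>D\<^sub>1 + D\<^sub>2\<close> (it would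
land in one summand), so \<open>D\<^sub>1 + D\<^sub>2\<close> maps to some \<open>D \<in> \<D>\<close>, and the antichain property forces
\<open>D\<^sub>1 = D = D\<^sub>2\<close>. The empty structure shows \<open>\<D> \<noteq> {}\<close>.\<close>

lemma is_hom_id: "is_hom S A A id"
  unfolding is_hom_def by auto

lemma hom_to_refl: "hom_to S A A"
  unfolding hom_to_def using is_hom_id by blast

lemma is_hom_comp: "is_hom S A B f \<Longrightarrow> is_hom S B C g \<Longrightarrow> is_hom S A C (g \<circ> f)"
  unfolding is_hom_def by (auto simp: image_subset_iff) (metis map_map)

lemma hom_to_trans: "hom_to S A B \<Longrightarrow> hom_to S B C \<Longrightarrow> hom_to S A C"
  unfolding hom_to_def using is_hom_comp by blast

lemma inc_adjI:
  "v \<in> verts A \<Longrightarrow> R \<in> S \<Longrightarrow> t \<in> rels A R \<Longrightarrow> v \<in> set t \<Longrightarrow> inc_adj S A (Inl v) (Inr (R, t))"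
  unfolding inc_adj_def by blast

lemma inc_adj_sym: "inc_adj S A x y \<Longrightarrow> inc_adj S A y x"
  unfolding inc_adj_def by blast

definition inc_closed :: "'r set \<Rightarrow> 'r struc \<Rightarrow> (nat + ('r \<times> nat list) \<Rightarrow> bool) \<Rightarrow> bool" where
  "inc_closed S A P \<longleftrightarrow> (\<forall>x y. inc_adj S A x y \<longrightarrow> (P x \<longleftrightarrow> P y))"

lemma inc_closed_Not: "inc_closed S A P \<Longrightarrow> inc_closed S A (\<lambda>x. \<not> P x)"
  unfolding inc_closed_def by blast

lemma inc_closed_rtranclp:
  assumes "inc_closed S A P" "(inc_adj S A)\<^sup>*\<^sup>* x y" "P x"
  shows "P y"
  using assms(2,3) by induction (use assms(1) in \<open>auto simp: inc_closed_def\<close>)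

lemma connected_struc_inc_closed:
  assumes "connected_struc S A" "inc_closed S A P"
    and "x \<in> inc_nodes S A" "y \<in> inc_nodes S A" "P x"
  shows "P y"
  using assms inc_closed_rtranclp unfolding connected_struc_def by metis

lemma not_connected_struc_split:
  assumes "\<not> connected_struc S A" "inc_nodes S A \<noteq> {}"
  obtains P x y where "inc_closed S A P" "x \<in> inc_nodes S A" "y \<in> inc_nodes S A" "P x" "\<not> P y"
proof -
  obtain x y where xy: "x \<in> inc_nodes S A" "y \<in> inc_nodes S A" "\<not> (inc_adj S A)\<^sup>*\<^sup>* x y"
    using assms unfolding connected_struc_def by blast
  have "inc_closed S A ((inc_adj S A)\<^sup>*\<^sup>* x)"
    unfolding inc_closed_def
    by (meson inc_adj_sym rtranclp.rtrancl_into_rtrancl)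
  with xy that show thesis by blast
qed

lemma inc_nodes_empty_is_hom:
  "inc_nodes S A = {} \<Longrightarrow> is_hom S A B f"
  unfolding inc_nodes_def is_hom_def by auto

definition empty_struc :: "'r struc" where
  "empty_struc = \<lparr>verts = {}, rels = (\<lambda>R. {})\<rparr>"

lemma is_struc_empty_struc: "is_struc S ar empty_struc"
  unfolding is_struc_def empty_struc_def by simp

lemma hom_to_empty_struc_inc_nodes: "hom_to S A empty_struc \<Longrightarrow> inc_nodes S A = {}"
  unfolding hom_to_def is_hom_def empty_struc_def inc_nodes_def by auto

definition induced_struc :: "(nat + ('r \<times> nat list) \<Rightarrow> bool) \<Rightarrow> 'r struc \<Rightarrow> 'r struc" where
  "induced_struc P A = \<lparr>verts = {v \<in> verts A. P (Inl v)},
     rels = (\<lambda>R. {t \<in> rels A R. P (Inr (R, t))})\<rparr>"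

lemma is_struc_induced_struc:
  assumes A: "is_struc S ar A" and P: "inc_closed S A P"
  shows "is_struc S ar (induced_struc P A)"
  unfolding is_struc_def
proof (intro conjI ballI allI impI)
  show "finite (verts (induced_struc P A))"
    using A unfolding is_struc_def induced_struc_def by simp
next
  fix R t assume R: "R \<in> S" and t: "t \<in> rels (induced_struc P A) R"
  then have t': "t \<in> rels A R" "P (Inr (R, t))" unfolding induced_struc_def by simp_all
  then have "length t = ar R" "set t \<subseteq> verts A" using A R unfolding is_struc_def by blast+
  moreover have "P (Inl v)" if "v \<in> set t" for v
    using P t' R that \<open>set t \<subseteq> verts A\<close> inc_adjI[of v A R S t] unfolding inc_closed_def by blast
  ultimately show "length t = ar R" "set t \<subseteq> verts (induced_struc P A)"
    unfolding induced_struc_def by auto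
next
  fix R assume "R \<notin> S"
  then show "rels (induced_struc P A) R = {}"
    using A unfolding is_struc_def induced_struc_def by simp
qed

lemma is_hom_induced_struc_incl: "is_hom S (induced_struc P A) A id"
  unfolding is_hom_def induced_struc_def by auto

lemma hom_to_glue_induced_struc:
  assumes A: "is_struc S ar A" and P: "inc_closed S A P"
    and f: "is_hom S (induced_struc P A) B f"
    and g: "is_hom S (induced_struc (\<lambda>x. \<not> P x) A) B g"
  shows "hom_to S A B"
proof -
  define h where "h v = (if P (Inl v) then f v else g v)" for v
  have "map h t \<in> rels B R" if R: "R \<in> S" and t: "t \<in> rels A R" for R t
  proof -
    have "P (Inl v) \<longleftrightarrow> P (Inr (R, t))" if "v \<in> set t" for v
      using P A R t that inc_adjI[of v A R S t] unfolding is_struc_def inc_closed_def by blast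
    then have "map h t = (if P (Inr (R, t)) then map f t else map g t)"
      unfolding h_def by (simp cong: map_cong)
    moreover have "map f t \<in> rels B R" if "P (Inr (R, t))"
      using f R t that unfolding is_hom_def induced_struc_def by simp
    moreover have "map g t \<in> rels B R" if "\<not> P (Inr (R, t))"
      using g R t that unfolding is_hom_def induced_struc_def by simp
    ultimately show ?thesis by presburger
  qed
  moreover have "h ` verts A \<subseteq> verts B"
    using f g unfolding is_hom_def induced_struc_def h_def by auto
  ultimately show ?thesis
    unfolding hom_to_def is_hom_def by blast
qed

text \<open>Counting vertices only shows that \<open>P\<close> holds on all vertices; a nullary block
\<open>(R, [])\<close> has no vertex, and it satisfies \<open>P\<close> because \<open>f\<close> maps it to itself.\<close>

lemma core_hom_to_induced_struc:
  assumes core: "is_core S ar A" and A: "is_struc S ar A" and P: "inc_closed S A P"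
    and f: "is_hom S A (induced_struc P A) f"
    and x: "x \<in> inc_nodes S A"
  shows "P x"
proof -
  have "hom_equiv S A (induced_struc P A)"
    using f is_hom_induced_struc_incl unfolding hom_equiv_def hom_to_def by blast
  then have "card (verts A) \<le> card (verts (induced_struc P A))"
    using core is_struc_induced_struc[OF A P] unfolding is_core_def by blast
  moreover have "verts (induced_struc P A) \<subseteq> verts A" "finite (verts A)"
    using A unfolding induced_struc_def is_struc_def by auto
  ultimately have "verts (induced_struc P A) = verts A"
    using card_seteq by blast
  then have verts_P: "P (Inl v)" if "v \<in> verts A" for v
    using that unfolding induced_struc_def by auto
  show ?thesis
  proof (cases x)
    case (Inl v)
    with x verts_P show ?thesis unfolding inc_nodes_def by auto
  next
    case (Inr b)
    then obtain R t where Rt: "x = Inr (R, t)" "R \<in> S" "t \<in> rels A R"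
      using x unfolding inc_nodes_def by auto
    show ?thesis
    proof (cases t)
      case Nil
      with Rt f show ?thesis unfolding is_hom_def induced_struc_def by fastforce
    next
      case (Cons v vs)
      then have "v \<in> set t" by simp
      then have "v \<in> verts A" using A Rt unfolding is_struc_def by blast
      with \<open>v \<in> set t\<close> Rt P verts_P inc_adjI[of v A R S t] show ?thesis
        unfolding inc_closed_def by blast
    qed
  qed
qed

definition disjoint_union :: "'r struc \<Rightarrow> 'r struc \<Rightarrow> 'r struc" where
  "disjoint_union A B = \<lparr>verts = (\<lambda>n. 2 * n) ` verts A \<union> (\<lambda>n. 2 * n + 1) ` verts B,
     rels = (\<lambda>R. map (\<lambda>n. 2 * n) ` rels A R \<union> map (\<lambda>n. 2 * n + 1) ` rels B R)\<rparr>"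

lemma is_struc_disjoint_union:
  assumes "is_struc S ar A" "is_struc S ar B"
  shows "is_struc S ar (disjoint_union A B)"
  using assms unfolding is_struc_def disjoint_union_def
  by (auto simp: image_iff) (metis subsetD)+

lemma hom_to_disjoint_union_left: "hom_to S A (disjoint_union A B)"
  unfolding hom_to_def is_hom_def disjoint_union_def by auto

lemma hom_to_disjoint_union_right: "hom_to S B (disjoint_union A B)"
  unfolding hom_to_def is_hom_def disjoint_union_def by auto

lemma is_hom_through_embedding:
  assumes dc: "\<And>n. d (c n) = n"
    and verts: "\<forall>v\<in>verts A. f v \<in> c ` verts B"
    and rels: "\<forall>R\<in>S. \<forall>t\<in>rels A R. map f t \<in> map c ` rels B R"
  shows "is_hom S A B (d \<circ> f)"
  unfolding is_hom_def
proof (intro conjI ballI)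
  show "(d \<circ> f) ` verts A \<subseteq> verts B" using verts dc by auto
next
  fix R t assume "R \<in> S" "t \<in> rels A R"
  then obtain s where s: "s \<in> rels B R" "map f t = map c s" using rels by blast
  have "map (d \<circ> f) t = map d (map c s)" by (simp flip: s(2))
  also have "\<dots> = s" by (simp add: dc map_idI)
  finally show "map (d \<circ> f) t \<in> rels B R" using s(1) by simp
qed

text \<open>The left summand consists of even numbers and the right one of odd numbers, so lying in
the left summand is a property of incidence nodes respected by adjacency.\<close>

lemma inc_closed_hom_to_disjoint_union_left:
  assumes f: "is_hom S A (disjoint_union B C) f" and B: "is_struc S ar B"
  shows "inc_closed S A (\<lambda>x. case x of Inl v \<Rightarrow> f v \<in> (\<lambda>n. 2 * n) ` verts B
    | Inr (R, t) \<Rightarrow> map f t \<in> map (\<lambda>n. 2 * n) ` rels B R)" (is "inc_closed S A ?P")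
proof -
  let ?l = "\<lambda>n::nat. 2 * n" and ?r = "\<lambda>n::nat. 2 * n + 1"
  have "?P (Inl v) \<longleftrightarrow> ?P (Inr (R, t))"
    if "v \<in> verts A" "R \<in> S" "t \<in> rels A R" "v \<in> set t" for v R t
  proof -
    have ft: "map f t \<in> map ?l ` rels B R \<union> map ?r ` rels C R"
      using f that unfolding is_hom_def disjoint_union_def by auto
    have "?P (Inl v)" if "map f t = map ?l s" "s \<in> rels B R" for s
    proof -
      have "f v \<in> ?l ` set s" using \<open>v \<in> set t\<close> that(1) by (metis image_eqI list.set_map)
      moreover have "set s \<subseteq> verts B" using B \<open>R \<in> S\<close> that(2) unfolding is_struc_def by blast
      ultimately show ?thesis by auto
    qed
    moreover have "\<not> ?P (Inl v)" if "map f t = map ?r s" for s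
    proof -
      have "f v \<in> ?r ` set s" using \<open>v \<in> set t\<close> that by (metis image_eqI list.set_map)
      then have "odd (f v)" by auto
      then show ?thesis by auto
    qed
    ultimately show ?thesis using ft by fastforce
  qed
  then show ?thesis
    unfolding inc_closed_def inc_adj_def by blast
qed

lemma connected_hom_to_disjoint_union:
  assumes conn: "connected_struc S A"
    and f: "is_hom S A (disjoint_union B C) f"
    and B: "is_struc S ar B"
  shows "hom_to S A B \<or> hom_to S A C"
proof -
  let ?l = "\<lambda>n::nat. 2 * n" and ?r = "\<lambda>n::nat. 2 * n + 1"
  define P where "P x = (case x of Inl v \<Rightarrow> f v \<in> ?l ` verts B
    | Inr (R, t) \<Rightarrow> map f t \<in> map ?l ` rels B R)" for x
  have closed: "inc_closed S A P"
    unfolding P_def by (rule inc_closed_hom_to_disjoint_union_left[OF f B])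
  obtain x where x: "x \<in> inc_nodes S A"
    using conn unfolding connected_struc_def by blast
  have P_nodes: "(\<forall>v\<in>verts A. Q (Inl v)) \<and> (\<forall>R\<in>S. \<forall>t\<in>rels A R. Q (Inr (R, t)))"
    if "Q x" "inc_closed S A Q" for Q
    using connected_struc_inc_closed[OF conn that(2) x _ that(1)] unfolding inc_nodes_def by blast
  show ?thesis
  proof (cases "P x")
    case True
    with P_nodes[OF _ closed] have "is_hom S A B ((\<lambda>n. n div 2) \<circ> f)"
      by (intro is_hom_through_embedding[where c = ?l]) (auto simp: P_def)
    then show ?thesis unfolding hom_to_def by blast
  next
    case False
    have "f v \<in> ?l ` verts B \<union> ?r ` verts C" if "v \<in> verts A" for v
      using f that unfolding is_hom_def disjoint_union_def by auto
    moreover have "map f t \<in> map ?l ` rels B R \<union> map ?r ` rels C R"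
      if "R \<in> S" "t \<in> rels A R" for R t
      using f that unfolding is_hom_def disjoint_union_def by auto
    ultimately have "is_hom S A C ((\<lambda>n. n div 2) \<circ> f)"
      using False P_nodes[OF _ inc_closed_Not[OF closed]]
      by (intro is_hom_through_embedding[where c = ?r]) (auto simp: P_def)
    then show ?thesis unfolding hom_to_def by blast
  qed
qed

lemma duality_pair_dual_no_obstruction:
  assumes dual: "duality_pair S ar Obs Dl" and D: "D \<in> Dl" and T: "T \<in> Obs"
  shows "\<not> hom_to S T D"
proof -
  have "is_struc S ar D" using dual D unfolding duality_pair_def by blast
  moreover have "\<exists>X\<in>Dl. hom_to S D X" using D hom_to_refl by blast
  ultimately show ?thesis using dual T unfolding duality_pair_def by blast
qed

lemma duality_pair_dual_nonempty:
  assumes dual: "duality_pair S ar Obs Dl" and conn: "\<forall>T\<in>Obs. connected_struc S T"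
  shows "Dl \<noteq> {}"
proof
  assume "Dl = {}"
  then obtain T where "T \<in> Obs" "hom_to S T empty_struc"
    using dual is_struc_empty_struc unfolding duality_pair_def by blast
  then show False
    using conn hom_to_empty_struc_inc_nodes unfolding connected_struc_def by blast
qed

lemma antichain_duality_dual_unique:
  assumes dual: "antichain_duality S ar Obs Dl" and conn: "\<forall>T\<in>Obs. connected_struc S T"
    and D1: "D1 \<in> Dl" and D2: "D2 \<in> Dl"
  shows "D1 = D2"
proof -
  have dp: "duality_pair S ar Obs Dl"
    and antichain: "\<forall>A\<in>Obs \<union> Dl. \<forall>B\<in>Obs \<union> Dl. A \<noteq> B \<longrightarrow> \<not> hom_to S A B"
    using dual unfolding antichain_duality_def by blast+
  have struc: "is_struc S ar D1" "is_struc S ar D2"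
    using dp D1 D2 unfolding duality_pair_def by blast+
  have "\<not> hom_to S T (disjoint_union D1 D2)" if T: "T \<in> Obs" for T
  proof
    assume "hom_to S T (disjoint_union D1 D2)"
    then obtain f where "is_hom S T (disjoint_union D1 D2) f" unfolding hom_to_def by blast
    with conn T struc(1) have "hom_to S T D1 \<or> hom_to S T D2"
      by (simp add: connected_hom_to_disjoint_union)
    then show False using duality_pair_dual_no_obstruction[OF dp] D1 D2 T by blast
  qed
  moreover have "is_struc S ar (disjoint_union D1 D2)"
    using is_struc_disjoint_union[OF struc] .
  ultimately obtain D where D: "D \<in> Dl" "hom_to S (disjoint_union D1 D2) D"
    using dp unfolding duality_pair_def by blast
  have "D1 = D"
    using antichain D(1) D1 hom_to_trans[OF hom_to_disjoint_union_left D(2)] by blast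
  moreover have "D2 = D"
    using antichain D(1) D2 hom_to_trans[OF hom_to_disjoint_union_right D(2)] by blast
  ultimately show ?thesis by simp
qed

lemma antichain_duality_induced_struc_to_dual:
  assumes dual: "antichain_duality S ar Obs Dl"
    and T: "T \<in> Obs" "is_core S ar T"
    and P: "inc_closed S T P" and x: "x \<in> inc_nodes S T" "\<not> P x"
  shows "\<exists>D\<in>Dl. hom_to S (induced_struc P T) D"
proof -
  have dp: "duality_pair S ar Obs Dl" and struc: "is_struc S ar T"
    using dual T unfolding antichain_duality_def duality_pair_def by auto
  have "\<not> hom_to S T' (induced_struc P T)" if T': "T' \<in> Obs" for T'
  proof
    assume "hom_to S T' (induced_struc P T)"
    moreover have "hom_to S (induced_struc P T) T"
      using is_hom_induced_struc_incl unfolding hom_to_def by blast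
    ultimately have "hom_to S T' T" by (rule hom_to_trans)
    then have "T' = T" using dual T T' unfolding antichain_duality_def by blast
    then show False
      using \<open>hom_to S T' (induced_struc P T)\<close> core_hom_to_induced_struc[OF T(2) struc P] x
      unfolding hom_to_def by blast
  qed
  then show ?thesis
    using dp is_struc_induced_struc[OF struc P] unfolding duality_pair_def by blast
qed

lemma antichain_duality_singleton_obstruction_connected:
  assumes dual: "antichain_duality S ar Obs {D}"
    and T: "T \<in> Obs" "is_core S ar T"
  shows "connected_struc S T"
proof (rule ccontr)
  assume disconn: "\<not> connected_struc S T"
  have dp: "duality_pair S ar Obs {D}" and struc: "is_struc S ar T"
    using dual T unfolding antichain_duality_def duality_pair_def by auto
  have "hom_to S T D"
  proof (cases "inc_nodes S T = {}")
    case True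
    then show ?thesis using inc_nodes_empty_is_hom unfolding hom_to_def by blast
  next
    case False
    with disconn obtain P x y where P: "inc_closed S T P"
      and xy: "x \<in> inc_nodes S T" "y \<in> inc_nodes S T" "P x" "\<not> P y"
      by (rule not_connected_struc_split)
    have "hom_to S (induced_struc P T) D"
      using antichain_duality_induced_struc_to_dual[OF dual T P xy(2,4)] by simp
    moreover have "hom_to S (induced_struc (\<lambda>x. \<not> P x) T) D"
      using antichain_duality_induced_struc_to_dual[OF dual T inc_closed_Not[OF P] xy(1)] xy(3)
      by simp
    ultimately show ?thesis
      using hom_to_glue_induced_struc[OF struc P] unfolding hom_to_def by blast
  qed
  then show False using duality_pair_dual_no_obstruction[OF dp] T by blast
qed

theorem lemma5p2:
  fixes S :: "'r set" and ar :: "'r \<Rightarrow> nat" and Obs Dl :: "'r struc set"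
  assumes "finite S"
    and "antichain_duality S ar Obs Dl"
    and "\<forall>T\<in>Obs. is_core S ar T"
  shows "card Dl = 1 \<longleftrightarrow> (\<forall>T\<in>Obs. connected_struc S T)"
proof
  assume "card Dl = 1"
  then obtain D where "Dl = {D}" by (auto simp: card_Suc_eq)
  with assms(2,3) show "\<forall>T\<in>Obs. connected_struc S T"
    using antichain_duality_singleton_obstruction_connected by metis
next
  assume conn: "\<forall>T\<in>Obs. connected_struc S T"
  have "duality_pair S ar Obs Dl" using assms(2) unfolding antichain_duality_def by blast
  from duality_pair_dual_nonempty[OF this conn] obtain D where "D \<in> Dl" by blast
  then have "Dl = {D}"
    using antichain_duality_dual_unique[OF assms(2) conn] by blast
  then show "card Dl = 1" by simp
qed

end
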